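(* Let $\Omega$ be a finite set, let $\mathcal C$ be the set of all functions from the power set of $\Omega$ to $\mathbb R$ (credence functions), and let $\mathcal P\subseteq\mathcal C$ be the set of probability functions on $\Omega$. Let $M$ be a finite real number and let $s:\mathcal P\to[-\infty,M]^\Omega$ be a proper scoring rule on $\mathcal P$. Then the following conditions are equivalent: (a) for every extension of $s$ to a quasi-strictly proper scoring rule $s':\mathcal C\to[-\infty,M]^\Omega$ (so $s'(p)=s(p)$ for $p\in\mathcal P$), if $c\in\mathcal C\setminus\mathcal P$, then there is a $p\in\mathcal P$ such that $s'(p)=s(p)$ strictly dominates $s'(c)$; (b) either $E_p s(p)$ is infinite for some $p\in\mathcal P$, or both of the following hold: (i) for any sequence $(p_n)$ in $\mathcal P$ converging to some $p\in\mathcal P$ such that $s(p_n)$ is finite for all $n$ while $s(p)$ is not finite, we have $\lim_n E_{p_n}s(p_n)=E_p s(p)$; (ii) if $F=s[\mathcal P]\cap\mathbb R^\Omega$ is the set of finite scores, then $F$ is dense in $\partial^+\operatorname{Conv}F$.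
   Context: An (accuracy) scoring rule is a function $s$ from a set $\mathcal F$ with $\mathcal P\subseteq\mathcal F\subseteq\mathcal C$ to $[-\infty,M]^\Omega$ for some finite $M$, where $A^B$ denotes the set of functions $B\to A$. For $p\in\mathcal P$ and $f:\Omega\to[-\infty,\infty]$, $E_p f=\sum_{\omega\in\Omega,\,p(\{\omega\})\neq0}p(\{\omega\})f(\omega)$. The rule $s$ is proper on $\mathcal F$ if $E_p s(p)\ge E_p s(c)$ for all $p\in\mathcal P$, $c\in\mathcal F$; strictly proper if the inequality is strict whenever $c\ne p$; quasi-strictly proper if it is proper and the inequality is strict whenever $p\in\mathcal P$ and $c\in\mathcal F\setminus\mathcal P$. A score $z\in[-\infty,M]^\Omega$ is finite if $|z(\omega)|<\infty$ for all $\omega$. A score $s(c_2)$ strictly dominates $s(c_1)$ if $s(c_2)(\omega)>s(c_1)(\omega)$ for all $\omega\in\Omega$. $\mathcal P$ carries the topology in which $p_n\to p$ iff $p_n(\{\omega\})\to p(\{\omega\})$ for all $\omega$. On $\mathbb R^\Omega$, $\langle f,g\rangle=\sum_\omega f(\omega)g(\omega)$. A boundary point $z$ of a set $G\subseteq\mathbb R^\Omega$ is positive-facing if there is $v\in(0,\infty)^\Omega$ with $\langle v,w\rangle\le\langle v,z\rangle$ for all $w\in G$; $\partial^+G$ is the set of positive-facing boundary points. $\operatorname{Conv}F$ is the convex hull of $F$. Density of $F$ in $B$ means every open set of $\mathbb R^\Omega$ meeting $B$ meets $F$. *)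

theory Defs
  imports "HOL-Analysis.Analysis" "HOL-Library.Extended_Real"
begin

text \<open>Omega is a finite type 'w. Credence functions: 'w set \<Rightarrow> real (all of C).
  Scores: 'w \<Rightarrow> ereal. Finite scores are identified with vectors in real^'w.\<close>

definition prob_fun :: "('w set \<Rightarrow> real) \<Rightarrow> bool" where
  "prob_fun p \<longleftrightarrow> (\<forall>A. 0 \<le> p A) \<and> p UNIV = 1 \<and>
     (\<forall>A B. A \<inter> B = {} \<longrightarrow> p (A \<union> B) = p A + p B)"

definition Probs :: "('w set \<Rightarrow> real) set" where
  "Probs = {p. prob_fun p}"

definition Exp :: "('w::finite set \<Rightarrow> real) \<Rightarrow> ('w \<Rightarrow> ereal) \<Rightarrow> ereal" where
  "Exp p f = (\<Sum>\<omega>\<in>{\<omega>. p {\<omega>} \<noteq> 0}. ereal (p {\<omega>}) * f \<omega>)"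

definition proper_on :: "('w::finite set \<Rightarrow> real) set \<Rightarrow> (('w set \<Rightarrow> real) \<Rightarrow> 'w \<Rightarrow> ereal) \<Rightarrow> bool" where
  "proper_on F s \<longleftrightarrow> (\<forall>p\<in>Probs. \<forall>c\<in>F. Exp p (s c) \<le> Exp p (s p))"

definition quasi_strictly_proper_on :: "('w::finite set \<Rightarrow> real) set \<Rightarrow> (('w set \<Rightarrow> real) \<Rightarrow> 'w \<Rightarrow> ereal) \<Rightarrow> bool" where
  "quasi_strictly_proper_on F s \<longleftrightarrow> proper_on F s \<and>
     (\<forall>p\<in>Probs. \<forall>c\<in>F - Probs. Exp p (s c) < Exp p (s p))"

definition finite_score :: "('w \<Rightarrow> ereal) \<Rightarrow> bool" where
  "finite_score z \<longleftrightarrow> (\<forall>\<omega>. \<bar>z \<omega>\<bar> < \<infinity>)"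

definition strictly_dominates :: "('w \<Rightarrow> ereal) \<Rightarrow> ('w \<Rightarrow> ereal) \<Rightarrow> bool" where
  "strictly_dominates z2 z1 \<longleftrightarrow> (\<forall>\<omega>. z1 \<omega> < z2 \<omega>)"

definition pos_facing_boundary :: "(real^'w::finite) set \<Rightarrow> (real^'w) set" where
  "pos_facing_boundary G = {z \<in> frontier G. \<exists>v. (\<forall>\<omega>. 0 < v $ \<omega>) \<and> (\<forall>w\<in>G. inner v w \<le> inner v z)}"

definition dense_in_set :: "(real^'w::finite) set \<Rightarrow> (real^'w) set \<Rightarrow> bool" where
  "dense_in_set F B \<longleftrightarrow> (\<forall>U. open U \<longrightarrow> U \<inter> B \<noteq> {} \<longrightarrow> U \<inter> F \<noteq> {})"

definition finite_scores :: "(('w::finite set \<Rightarrow> real) \<Rightarrow> 'w \<Rightarrow> ereal) \<Rightarrow> (real^'w) set" where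
  "finite_scores s = {z. \<exists>p\<in>Probs. \<forall>\<omega>. s p \<omega> = ereal (z $ \<omega>)}"

end

theory Submission
  imports Defs
begin

(* If E_p s(p) = -infinity for some p, then s has no quasi-strictly proper extension at all and
   both sides hold.  Otherwise every E_p s(p) is finite, and a score z <= M can be given to a
   non-probability in a quasi-strictly proper extension exactly when E_q z < E_q s(q) for all q;
   so (a) says that every such inferior z is strictly dominated by some s(p).

   Dominating s(p) - e shows that E_p s(p) is the supremum of <p, u> over the finite scores u;
   with E_q s(q) <= (1 - t) E_p s(p) + t M whenever q >= (1 - t) p this gives (i).  Dominating
   w - e for a positive-facing boundary point w with normal v gives a finite score u > w - e
   with <v, u> <= <v, w>, hence u close to w, which is (ii).

   Conversely, (i) yields the supremum property also where s(p) is not finite, by approaching p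
   through mixtures with the uniform distribution.  Replacing the -infinity entries of an
   inferior z by -N, compactness of the simplex gives a single N such that every q sees a
   finite score above the truncated z; a separating hyperplane then puts a point of Conv F
   strictly above it, and a maximiser of prod_i (x_i - z_i) over the closure of Conv F is a
   positive-facing boundary point above it.  By (ii) some finite score lies above the
   truncation as well, and it strictly dominates z. *)

section \<open>Probability functions and expectations\<close>

definition prob_vec :: "('w::finite set \<Rightarrow> real) \<Rightarrow> real^'w" where
  "prob_vec p = (\<chi> \<omega>. p {\<omega>})"

definition prob_of_vec :: "real^'w::finite \<Rightarrow> 'w set \<Rightarrow> real" where
  "prob_of_vec q = (\<lambda>A. \<Sum>\<omega>\<in>A. q $ \<omega>)"

definition prob_simplex :: "(real^'n::finite) set" where
  "prob_simplex = {q. (\<forall>i. 0 \<le> q $ i) \<and> (\<Sum>i\<in>UNIV. q $ i) = 1}"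

definition uniform_prob :: "'w::finite set \<Rightarrow> real" where
  "uniform_prob = prob_of_vec (\<chi> \<omega>. 1 / real CARD('w))"

lemma Probs_nonneg: "p \<in> Probs \<Longrightarrow> 0 \<le> p A"
  by (simp add: Probs_def prob_fun_def)

lemma Probs_additive: "p \<in> Probs \<Longrightarrow> A \<inter> B = {} \<Longrightarrow> p (A \<union> B) = p A + p B"
  by (simp add: Probs_def prob_fun_def)

lemma Probs_eq_sum_singletons:
  fixes p :: "'w::finite set \<Rightarrow> real"
  assumes p: "p \<in> Probs"
  shows "p A = (\<Sum>\<omega>\<in>A. p {\<omega>})"
  using finite[of A]
proof (induction rule: finite_induct)
  case empty
  show ?case using Probs_additive[OF p, of "{}" "{}"] by simp
next
  case (insert \<omega> A)
  then show ?case using Probs_additive[OF p, of "{\<omega>}" A] by simp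
qed

lemma Probs_sum_singletons: "(p::'w::finite set \<Rightarrow> real) \<in> Probs \<Longrightarrow> (\<Sum>\<omega>\<in>UNIV. p {\<omega>}) = 1"
  using Probs_eq_sum_singletons[of p UNIV] by (simp add: Probs_def prob_fun_def)

lemma zero_notin_Probs: "(\<lambda>A. 0) \<notin> Probs"
  by (simp add: Probs_def prob_fun_def)

lemma prob_vec_nth [simp]: "prob_vec p $ \<omega> = p {\<omega>}"
  by (simp add: prob_vec_def)

lemma prob_of_vec_singleton [simp]: "prob_of_vec q {\<omega>} = q $ \<omega>"
  by (simp add: prob_of_vec_def)

lemma prob_vec_prob_of_vec [simp]: "prob_vec (prob_of_vec q) = q"
  by (simp add: vec_eq_iff)

lemma prob_of_vec_in_Probs:
  assumes "q \<in> prob_simplex"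
  shows "prob_of_vec q \<in> Probs"
  using assms unfolding Probs_def prob_fun_def prob_simplex_def prob_of_vec_def
  by (auto intro: sum_nonneg sum.union_disjoint)

lemma uniform_prob_in_Probs: "uniform_prob \<in> Probs"
  unfolding uniform_prob_def by (rule prob_of_vec_in_Probs) (simp add: prob_simplex_def)

lemma uniform_prob_pos: "0 < uniform_prob {\<omega>}"
  by (simp add: uniform_prob_def)

lemma compact_prob_simplex: "compact (prob_simplex :: (real^'n::finite) set)"
proof -
  have "prob_simplex = (\<Inter>i. {q::real^'n. 0 \<le> q $ i}) \<inter> {q. (\<chi> i. 1) \<bullet> q = 1}"
    by (auto simp: prob_simplex_def inner_vec_def)
  then have "closed (prob_simplex :: (real^'n) set)"
    by (metis closed_INT closed_Int closed_halfspace_component_ge_cart closed_hyperplane)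
  moreover have "prob_simplex \<subseteq> cbox 0 (\<chi> i. 1::real^'n)"
  proof
    fix q :: "real^'n"
    assume q: "q \<in> prob_simplex"
    then have "q $ i \<le> (\<Sum>j\<in>UNIV. q $ j)" for i
      by (intro member_le_sum) (auto simp: prob_simplex_def)
    with q show "q \<in> cbox 0 (\<chi> i. 1)"
      by (auto simp: mem_box_cart prob_simplex_def)
  qed
  ultimately show ?thesis
    using bounded_cbox bounded_subset compact_eq_bounded_closed by blast
qed

lemma scaled_lower_bound_sequence:
  fixes p :: "'w::finite set \<Rightarrow> real"
  assumes p: "p \<in> Probs" and ps: "\<And>n. ps n \<in> Probs" and conv: "\<And>\<omega>. (\<lambda>n. ps n {\<omega>}) \<longlonglongrightarrow> p {\<omega>}"
  obtains t where "t \<longlonglongrightarrow> 0" and "\<And>n. 0 \<le> t n" and "\<And>n \<omega>. (1 - t n) * p {\<omega>} \<le> ps n {\<omega>}"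
proof
  define P where "P = {\<omega>. 0 < p {\<omega>}}"
  define t where "t n = (\<Sum>\<omega>\<in>P. \<bar>ps n {\<omega>} - p {\<omega>}\<bar> / p {\<omega>})" for n
  have "t \<longlonglongrightarrow> (\<Sum>\<omega>\<in>P. \<bar>p {\<omega>} - p {\<omega>}\<bar> / p {\<omega>})"
    unfolding t_def by (intro tendsto_intros conv) (simp add: P_def)
  then show "t \<longlonglongrightarrow> 0"
    by simp
  show "0 \<le> t n" for n
    unfolding t_def P_def by (intro sum_nonneg) simp
  show "(1 - t n) * p {\<omega>} \<le> ps n {\<omega>}" for n \<omega>
  proof (cases "\<omega> \<in> P")
    case True
    then have "\<bar>ps n {\<omega>} - p {\<omega>}\<bar> / p {\<omega>} \<le> t n"
      unfolding t_def P_def by (intro member_le_sum) auto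
    then show ?thesis
      using True by (auto simp: P_def field_simps)
  next
    case False
    then show ?thesis
      using Probs_nonneg[OF p, of "{\<omega>}"] Probs_nonneg[OF ps] by (simp add: P_def)
  qed
qed

lemma positive_approximating_sequence:
  fixes p :: "'w::finite set \<Rightarrow> real"
  assumes p: "p \<in> Probs"
  obtains qs t where "\<And>n. qs n \<in> Probs" and "\<And>n \<omega>. 0 < qs n {\<omega>}"
    and "\<And>\<omega>. (\<lambda>n. qs n {\<omega>}) \<longlonglongrightarrow> p {\<omega>}" and "t \<longlonglongrightarrow> 0" and "\<And>n. 0 < t n" and "\<And>n. t n < 1"
    and "\<And>n. prob_vec (qs n) = (1 - t n) *\<^sub>R prob_vec p + t n *\<^sub>R prob_vec uniform_prob"
proof -
  define t :: "nat \<Rightarrow> real" where "t n = inverse (real (Suc n)) / 2" for n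
  define qs where "qs n = prob_of_vec ((1 - t n) *\<^sub>R prob_vec p + t n *\<^sub>R prob_vec uniform_prob)" for n
  have t_pos: "0 < t n" and t_less: "t n < 1" for n
    by (simp_all add: t_def field_simps)
  have t_lim: "t \<longlonglongrightarrow> 0"
    unfolding t_def by (intro tendsto_divide_zero LIMSEQ_inverse_real_of_nat)
  have qs_nth: "qs n {\<omega>} = (1 - t n) * p {\<omega>} + t n * uniform_prob {\<omega>}" for n \<omega>
    by (simp add: qs_def)
  have qs_pos: "0 < qs n {\<omega>}" for n \<omega>
    unfolding qs_nth using t_pos[of n] t_less[of n] Probs_nonneg[OF p] uniform_prob_pos
    by (intro add_nonneg_pos mult_pos_pos) simp_all
  have qs_Probs: "qs n \<in> Probs" for n
  proof -
    have "(\<Sum>\<omega>\<in>UNIV. qs n {\<omega>}) = 1"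
      using Probs_sum_singletons[OF p] Probs_sum_singletons[OF uniform_prob_in_Probs, where 'w='w]
      by (simp add: qs_nth sum.distrib flip: sum_distrib_left)
    then show ?thesis
      unfolding qs_def using qs_pos[of n]
      by (intro prob_of_vec_in_Probs) (auto simp: prob_simplex_def qs_def less_imp_le)
  qed
  have qs_lim: "(\<lambda>n. qs n {\<omega>}) \<longlonglongrightarrow> p {\<omega>}" for \<omega>
  proof -
    have "(\<lambda>n. (1 - t n) * p {\<omega>} + t n * uniform_prob {\<omega>}) \<longlonglongrightarrow> (1 - 0) * p {\<omega>} + 0 * uniform_prob {\<omega>}"
      by (intro tendsto_intros t_lim)
    then show ?thesis
      by (simp add: qs_nth)
  qed
  show ?thesis
    by (rule that[OF qs_Probs qs_pos qs_lim t_lim t_pos t_less]) (simp add: qs_def)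
qed

lemma Exp_eq_sum: "Exp p f = (\<Sum>\<omega>\<in>UNIV. ereal (p {\<omega>}) * f \<omega>)"
  unfolding Exp_def by (rule sum.mono_neutral_left) (simp_all add: zero_ereal_def[symmetric])

lemma inner_prob_vec: "prob_vec p \<bullet> x = (\<Sum>\<omega>\<in>UNIV. p {\<omega>} * x $ \<omega>)"
  by (simp add: inner_vec_def)

lemma Exp_ereal_vec: "Exp p (\<lambda>\<omega>. ereal (x $ \<omega>)) = ereal (prob_vec p \<bullet> x)"
  unfolding Exp_eq_sum inner_prob_vec by simp

lemma inner_prob_vec_const: "p \<in> Probs \<Longrightarrow> prob_vec p \<bullet> (\<chi> \<omega>. c) = c"
  by (simp add: inner_prob_vec Probs_sum_singletons flip: sum_distrib_right)

lemma Exp_mono: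
  assumes "p \<in> Probs" "\<And>\<omega>. f \<omega> \<le> g \<omega>"
  shows "Exp p f \<le> Exp p g"
  unfolding Exp_eq_sum
  by (intro sum_mono ereal_mult_left_mono) (simp_all add: assms Probs_nonneg)

lemma Exp_le_const:
  assumes p: "p \<in> Probs" and "\<And>\<omega>. f \<omega> \<le> ereal M"
  shows "Exp p f \<le> ereal M"
proof -
  have "Exp p f \<le> Exp p (\<lambda>\<omega>. ereal ((\<chi> \<omega>. M) $ \<omega>))"
    by (rule Exp_mono) (simp_all add: p assms(2))
  then show ?thesis
    by (simp only: Exp_ereal_vec inner_prob_vec_const[OF p])
qed

lemma Exp_add_const:
  assumes p: "p \<in> Probs" and f: "\<And>\<omega>. f \<omega> \<noteq> \<infinity>"
  shows "Exp p (\<lambda>\<omega>. f \<omega> + ereal c) = Exp p f + ereal c"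
proof -
  have "ereal (p {\<omega>}) * (f \<omega> + ereal c) = ereal (p {\<omega>}) * f \<omega> + ereal (p {\<omega>} * c)" for \<omega>
    using Probs_nonneg[OF p, of "{\<omega>}"] f[of \<omega>]
    by (cases "f \<omega>"; cases "p {\<omega>} = 0") (auto simp: algebra_simps)
  then have "Exp p (\<lambda>\<omega>. f \<omega> + ereal c) = Exp p f + ereal (\<Sum>\<omega>\<in>UNIV. p {\<omega>} * c)"
    by (simp add: Exp_eq_sum sum.distrib)
  then show ?thesis
    by (simp add: Probs_sum_singletons[OF p] flip: sum_distrib_right)
qed

lemma Exp_eq_minf:
  assumes p: "p \<in> Probs" and f: "\<And>\<omega>. f \<omega> \<le> ereal M"
    and "0 < p {\<omega>}" and "f \<omega> = -\<infinity>"
  shows "Exp p f = -\<infinity>"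
proof -
  have "(\<Sum>i\<in>UNIV - {\<omega>}. ereal (p {i}) * f i) \<le> (\<Sum>i\<in>UNIV - {\<omega>}. ereal (p {i}) * ereal M)"
    by (intro sum_mono ereal_mult_left_mono) (simp_all add: f Probs_nonneg[OF p])
  then have "(\<Sum>i\<in>UNIV - {\<omega>}. ereal (p {i}) * f i) \<noteq> \<infinity>"
    by auto
  moreover have "Exp p f = ereal (p {\<omega>}) * f \<omega> + (\<Sum>i\<in>UNIV - {\<omega>}. ereal (p {i}) * f i)"
    unfolding Exp_eq_sum by (rule sum.remove) auto
  ultimately show ?thesis
    using assms(3,4) by simp
qed

definition truncate_minf :: "('w::finite \<Rightarrow> ereal) \<Rightarrow> nat \<Rightarrow> real^'w" where
  "truncate_minf z N = (\<chi> \<omega>. if z \<omega> = -\<infinity> then - real N else real_of_ereal (z \<omega>))"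

lemma inner_truncate_minf_antimono:
  assumes "N \<le> N'" and "q \<in> prob_simplex"
  shows "q \<bullet> truncate_minf z N' \<le> q \<bullet> truncate_minf z N"
  unfolding inner_vec_def using assms
  by (intro sum_mono) (auto intro!: mult_left_mono simp: truncate_minf_def prob_simplex_def)

lemma inner_truncate_minf_unbounded:
  assumes "q \<in> prob_simplex" and "z \<omega> = -\<infinity>" and "0 < q $ \<omega>"
  shows "\<exists>N. q \<bullet> truncate_minf z N < c"
proof -
  define B where "B = (\<Sum>i\<in>UNIV. if z i = -\<infinity> then q $ i else 0)"
  have "q $ \<omega> = (if z \<omega> = -\<infinity> then q $ \<omega> else 0)"
    using assms by simp
  also have "\<dots> \<le> B"
    unfolding B_def by (rule member_le_sum) (use assms in \<open>auto simp: prob_simplex_def\<close>)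
  finally have "q $ \<omega> \<le> B" .
  then have "0 < B"
    using assms(3) by linarith
  have shift: "q \<bullet> truncate_minf z N = q \<bullet> truncate_minf z 0 - real N * B" for N
    unfolding inner_vec_def B_def truncate_minf_def
    by (simp add: sum_distrib_left flip: sum_subtractf) (intro sum.cong; simp)
  obtain N where "q \<bullet> truncate_minf z 0 - c < real N * B"
    using reals_Archimedean3[OF \<open>0 < B\<close>] by blast
  then show ?thesis
    using shift by (metis diff_less_eq add.commute)
qed

lemma Exp_eq_inner_truncate_minf:
  assumes "\<And>\<omega>. z \<omega> \<noteq> \<infinity>" and "\<And>\<omega>. z \<omega> = -\<infinity> \<Longrightarrow> p {\<omega>} = 0"
  shows "Exp p z = ereal (prob_vec p \<bullet> truncate_minf z N)"
proof -
  have "ereal (p {\<omega>}) * z \<omega> = ereal (p {\<omega>} * truncate_minf z N $ \<omega>)" for \<omega>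
    using assms[of \<omega>] by (cases "z \<omega>") (auto simp: truncate_minf_def)
  then show ?thesis
    by (simp add: Exp_eq_sum inner_prob_vec)
qed

lemma less_if_truncate_minf_less:
  assumes "z \<omega> \<noteq> \<infinity>" and "truncate_minf z N $ \<omega> < x"
  shows "z \<omega> < ereal x"
  using assms by (cases "z \<omega>") (auto simp: truncate_minf_def)

lemma uniform_truncation:
  fixes F :: "(real^'w::finite) set"
  assumes "\<forall>q\<in>prob_simplex. \<exists>N. \<exists>u\<in>F. q \<bullet> truncate_minf z N < q \<bullet> u"
  shows "\<exists>N. \<forall>q\<in>prob_simplex. \<exists>u\<in>F. q \<bullet> truncate_minf z N < q \<bullet> u"
proof -
  define Cov where "Cov = (\<lambda>(N, u). {q::real^'w. q \<bullet> truncate_minf z N < q \<bullet> u})"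
  have "open (Cov Nu)" for Nu
    unfolding Cov_def by (cases Nu) (simp, intro open_Collect_less continuous_intros)
  moreover have "prob_simplex \<subseteq> \<Union> (Cov ` (UNIV \<times> F))"
    using assms unfolding Cov_def by fastforce
  ultimately obtain J where J: "J \<subseteq> UNIV \<times> F" "finite J" "prob_simplex \<subseteq> \<Union> (Cov ` J)"
    using compactE_image[OF compact_prob_simplex, of "UNIV \<times> F" Cov] by metis
  define N0 where "N0 = Max (insert 0 (fst ` J))"
  have "\<exists>u\<in>F. q \<bullet> truncate_minf z N0 < q \<bullet> u" if "q \<in> prob_simplex" for q
  proof -
    obtain N u where "(N, u) \<in> J" and "q \<bullet> truncate_minf z N < q \<bullet> u"
      using J(3) \<open>q \<in> prob_simplex\<close> unfolding Cov_def by fast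
    moreover have "N \<le> N0"
      unfolding N0_def using \<open>(N, u) \<in> J\<close> \<open>finite J\<close> by (intro Max_ge) force+
    ultimately show ?thesis
      using J(1) inner_truncate_minf_antimono[OF _ \<open>q \<in> prob_simplex\<close>, of N N0 z] by force
  qed
  then show ?thesis
    by blast
qed

section \<open>Convex geometry of score vectors\<close>

lemma closure_convex_hull_halfspace_le:
  fixes F :: "'a::real_inner set"
  assumes "\<And>u. u \<in> F \<Longrightarrow> a \<bullet> u \<le> b" and "x \<in> closure (convex hull F)"
  shows "a \<bullet> x \<le> b"
proof -
  have "closure (convex hull F) \<subseteq> {x. a \<bullet> x \<le> b}"
    using assms(1) by (intro closure_minimal hull_minimal) (auto simp: convex_halfspace_le closed_halfspace_le)
  then show ?thesis
    using assms(2) by blast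
qed

lemma closure_convex_hull_component_le:
  fixes F :: "(real^'n) set"
  assumes "\<And>u. u \<in> F \<Longrightarrow> u $ i \<le> M" and "x \<in> closure (convex hull F)"
  shows "x $ i \<le> M"
  using closure_convex_hull_halfspace_le[of F "axis i 1" M x] assms
  by (simp add: inner_axis')

lemma orthant_lower_bound:
  fixes a :: "real^'n"
  assumes bound: "\<And>y. \<forall>j. 0 < y $ j \<Longrightarrow> b \<le> a \<bullet> y"
  shows "0 \<le> a $ i" and "b \<le> 0"
proof -
  show "0 \<le> a $ i"
  proof (rule ccontr)
    assume "\<not> 0 \<le> a $ i"
    define c where "c = (\<bar>a \<bullet> (\<chi> j. 1)\<bar> + \<bar>b\<bar> + 1) / - a $ i"
    have "b \<le> a \<bullet> ((\<chi> j. 1) + c *\<^sub>R axis i 1)"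
      using \<open>\<not> 0 \<le> a $ i\<close> by (intro bound) (auto simp: c_def axis_def)
    also have "\<dots> = a \<bullet> (\<chi> j. 1) + c * a $ i"
      by (simp add: inner_add_right inner_axis)
    also have "c * a $ i = - (\<bar>a \<bullet> (\<chi> j. 1)\<bar> + \<bar>b\<bar> + 1)"
      using \<open>\<not> 0 \<le> a $ i\<close> by (simp add: c_def)
    finally show False
      by linarith
  qed
  show "b \<le> 0"
  proof (rule ccontr)
    assume "\<not> b \<le> 0"
    define d where "d = b / (2 * (\<bar>\<Sum>j\<in>UNIV. a $ j\<bar> + 1))"
    have "b \<le> a \<bullet> (\<chi> j. d)"
      using \<open>\<not> b \<le> 0\<close> by (intro bound) (simp add: d_def)
    also have "\<dots> = d * (\<Sum>j\<in>UNIV. a $ j)"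
      by (simp add: inner_vec_def sum_distrib_left mult.commute)
    also have "\<dots> < b"
      using \<open>\<not> b \<le> 0\<close> unfolding d_def
      by (smt (verit) abs_le_self_iff divide_le_eq_1 le_divide_eq mult_le_cancel_left_pos times_divide_eq_left)
    finally show False
      by simp
  qed
qed

lemma convex_pos_orthant: "convex {y::real^'n. \<forall>i. 0 < y $ i}"
  unfolding convex_def
  by (auto intro: add_pos_nonneg add_nonneg_pos simp: less_eq_real_def)

lemma normalized_in_prob_simplex:
  fixes a :: "real^'n"
  assumes "\<And>i. 0 \<le> a $ i" and "a \<noteq> 0"
  shows "0 < (\<Sum>i\<in>UNIV. a $ i)" and "(1 / (\<Sum>i\<in>UNIV. a $ i)) *\<^sub>R a \<in> prob_simplex"
proof -
  obtain i where "a $ i \<noteq> 0"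
    using \<open>a \<noteq> 0\<close> by (metis vec_eq_iff zero_index)
  then have "0 < a $ i"
    using assms(1)[of i] by simp
  also have "a $ i \<le> (\<Sum>i\<in>UNIV. a $ i)"
    by (rule member_le_sum) (auto simp: assms(1))
  finally show "0 < (\<Sum>i\<in>UNIV. a $ i)" .
  then show "(1 / (\<Sum>i\<in>UNIV. a $ i)) *\<^sub>R a \<in> prob_simplex"
    by (simp add: prob_simplex_def assms(1) flip: sum_divide_distrib)
qed

lemma exists_convex_hull_above:
  fixes F :: "(real^'n) set"
  assumes "\<forall>q\<in>prob_simplex. \<exists>u\<in>F. q \<bullet> z < q \<bullet> u"
  shows "\<exists>x\<in>convex hull F. \<forall>i. z $ i < x $ i"
proof (rule ccontr)
  assume none: "\<not> ?thesis"
  define A where "A = (\<lambda>x. x - z) ` (convex hull F)"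
  define B where "B = {y::real^'n. \<forall>i. 0 < y $ i}"
  have "(\<chi> i::'n. 1 / real CARD('n)) \<in> prob_simplex"
    by (simp add: prob_simplex_def)
  then obtain u0 where "u0 \<in> F"
    using assms by (meson bexE)
  then have "A \<noteq> {}"
    unfolding A_def using hull_inc[of u0 F] by blast
  have "(\<chi> i. 1) \<in> B"
    by (simp add: B_def)
  then have "B \<noteq> {}"
    by blast
  have "A \<inter> B = {}"
    using none unfolding A_def B_def by auto
  have "convex A"
    unfolding A_def by simp
  have "convex B"
    unfolding B_def by (rule convex_pos_orthant)
  obtain a b where "a \<noteq> 0" and A_le: "\<forall>x\<in>A. a \<bullet> x \<le> b" and B_ge: "\<forall>y\<in>B. b \<le> a \<bullet> y"
    using separating_hyperplane_sets[OF \<open>convex A\<close> \<open>convex B\<close> \<open>A \<noteq> {}\<close> \<open>B \<noteq> {}\<close> \<open>A \<inter> B = {}\<close>]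
    by blast
  have orthant_ge: "\<And>y. \<forall>j. 0 < y $ j \<Longrightarrow> b \<le> a \<bullet> y"
    using B_ge by (simp add: B_def)
  note a_nonneg = orthant_lower_bound(1)[OF orthant_ge] and b_nonpos = orthant_lower_bound(2)[OF orthant_ge]
  define S where "S = (\<Sum>i\<in>UNIV. a $ i)"
  have "0 < S" and "(1 / S) *\<^sub>R a \<in> prob_simplex"
    unfolding S_def using normalized_in_prob_simplex[OF a_nonneg \<open>a \<noteq> 0\<close>] by simp_all
  then obtain u where "u \<in> F" and "((1 / S) *\<^sub>R a) \<bullet> z < ((1 / S) *\<^sub>R a) \<bullet> u"
    using assms by blast
  then have "a \<bullet> z < a \<bullet> u"
    using \<open>0 < S\<close> by (simp add: divide_less_cancel)
  moreover have "a \<bullet> (u - z) \<le> b"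
    using A_le \<open>u \<in> F\<close> unfolding A_def by (simp add: hull_inc)
  ultimately show False
    using b_nonpos by (simp add: inner_diff_right)
qed

lemma exists_max_prod_above:
  fixes K :: "(real^'n) set"
  assumes "closed K" and K_le: "\<And>x i. x \<in> K \<Longrightarrow> x $ i \<le> M"
    and "x0 \<in> K" and x0_above: "\<forall>i. z $ i < x0 $ i"
  obtains w where "w \<in> K" and "\<forall>i. z $ i < w $ i"
    and "\<And>x. x \<in> K \<Longrightarrow> \<forall>i. z $ i \<le> x $ i \<Longrightarrow> (\<Prod>i\<in>UNIV. x $ i - z $ i) \<le> (\<Prod>i\<in>UNIV. w $ i - z $ i)"
proof -
  define C where "C = K \<inter> cbox z (\<chi> i. M)"
  have C_iff: "x \<in> C \<longleftrightarrow> x \<in> K \<and> (\<forall>i. z $ i \<le> x $ i)" for x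
    using K_le by (auto simp: C_def mem_box_cart)
  have "compact C"
    unfolding C_def using \<open>closed K\<close> by (rule closed_Int_compact) simp
  moreover have "x0 \<in> C"
    using \<open>x0 \<in> K\<close> x0_above by (simp add: C_iff less_imp_le)
  moreover have "continuous_on C (\<lambda>x. \<Prod>i\<in>UNIV. x $ i - z $ i)"
    by (intro continuous_intros)
  ultimately obtain w where "w \<in> C" and w_max: "\<forall>x\<in>C. (\<Prod>i\<in>UNIV. x $ i - z $ i) \<le> (\<Prod>i\<in>UNIV. w $ i - z $ i)"
    using continuous_attains_sup[of C] by blast
  have "0 < (\<Prod>i\<in>UNIV. x0 $ i - z $ i)"
    using x0_above by (simp add: prod_pos)
  also have "\<dots> \<le> (\<Prod>i\<in>UNIV. w $ i - z $ i)"
    using w_max \<open>x0 \<in> C\<close> by blast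
  finally have "w $ i - z $ i \<noteq> 0" for i
    by (metis UNIV_I finite less_irrefl prod_zero_iff)
  then have "\<forall>i. z $ i < w $ i"
    using \<open>w \<in> C\<close> unfolding C_iff by (metis order_le_neq_trans right_minus_eq)
  moreover have "w \<in> K"
    using \<open>w \<in> C\<close> C_iff by blast
  ultimately show ?thesis
    using that w_max C_iff by blast
qed

lemma log_barrier_segment_has_derivative:
  fixes w x z :: "real^'n"
  assumes "\<forall>i. z $ i < w $ i"
  shows "((\<lambda>t. \<Sum>i\<in>UNIV. ln (w $ i - z $ i + t * (x $ i - w $ i))) has_real_derivative
      (\<chi> i. 1 / (w $ i - z $ i)) \<bullet> (x - w)) (at 0)"
proof -
  have "((\<lambda>t. \<Sum>i\<in>UNIV. ln (w $ i - z $ i + t * (x $ i - w $ i))) has_real_derivative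
      (\<Sum>i\<in>UNIV. (x $ i - w $ i) / (w $ i - z $ i))) (at 0)"
    using assms by (auto intro!: derivative_eq_intros simp: field_simps)
  then show ?thesis
    by (simp add: inner_vec_def field_simps)
qed

lemma eventually_segment_above:
  fixes w x z :: "real^'n"
  assumes "\<forall>i. z $ i < w $ i"
  shows "\<forall>\<^sub>F t in at_right 0. \<forall>i. 0 < w $ i - z $ i + t * (x $ i - w $ i)"
proof (intro eventually_all_finite allI)
  fix i
  have "((\<lambda>t. w $ i - z $ i + t * (x $ i - w $ i)) \<longlongrightarrow> w $ i - z $ i) (at_right 0)"
    by (auto intro!: tendsto_eq_intros)
  moreover have "0 < w $ i - z $ i"
    using assms by simp
  ultimately show "\<forall>\<^sub>F t in at_right 0. 0 < w $ i - z $ i + t * (x $ i - w $ i)"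
    by (rule order_tendstoD(1))
qed

(* The normal is the gradient at w of the log-barrier sum_i ln (x_i - z_i), so a point x of K
   with a larger inner product would let the product grow along the segment from w to x. *)
lemma max_prod_above_supporting:
  fixes K :: "(real^'n) set"
  assumes "convex K" and "w \<in> K" and "x \<in> K" and w_above: "\<forall>i. z $ i < w $ i"
    and w_max: "\<And>y. y \<in> K \<Longrightarrow> \<forall>i. z $ i \<le> y $ i \<Longrightarrow> (\<Prod>i\<in>UNIV. y $ i - z $ i) \<le> (\<Prod>i\<in>UNIV. w $ i - z $ i)"
  shows "(\<chi> i. 1 / (w $ i - z $ i)) \<bullet> x \<le> (\<chi> i. 1 / (w $ i - z $ i)) \<bullet> w"
proof (rule ccontr)
  define h where "h t = (\<Sum>i\<in>UNIV. ln (w $ i - z $ i + t * (x $ i - w $ i)))" for t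
  assume "\<not> ?thesis"
  then have "0 < (\<chi> i. 1 / (w $ i - z $ i)) \<bullet> (x - w)"
    by (simp add: inner_diff_right)
  then obtain d where "0 < d" and h_inc: "\<And>t. 0 < t \<Longrightarrow> t < d \<Longrightarrow> h 0 < h t"
    using DERIV_pos_inc_right[OF log_barrier_segment_has_derivative[OF w_above]] unfolding h_def by force
  have "\<forall>\<^sub>F t in at_right 0. 0 < t \<and> t < min d 1"
    using \<open>0 < d\<close> eventually_at_right_real[of 0 "min d 1"] by simp
  with eventually_segment_above[OF w_above]
  have "\<forall>\<^sub>F t in at_right 0. (\<forall>i. 0 < w $ i - z $ i + t * (x $ i - w $ i)) \<and> 0 < t \<and> t < min d 1"
    by (rule eventually_conj)
  then have "\<exists>t. (\<forall>i. 0 < w $ i - z $ i + t * (x $ i - w $ i)) \<and> 0 < t \<and> t < min d 1"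
    by (rule eventually_happens'[OF trivial_limit_at_right_real])
  then obtain t where pos: "\<forall>i. 0 < w $ i - z $ i + t * (x $ i - w $ i)" and "0 < t" "t < d" "t < 1"
    by auto
  define y where "y = (1 - t) *\<^sub>R w + t *\<^sub>R x"
  have y_nth: "y $ i - z $ i = w $ i - z $ i + t * (x $ i - w $ i)" for i
    by (simp add: y_def algebra_simps)
  have "y \<in> K"
    unfolding y_def using \<open>convex K\<close> \<open>w \<in> K\<close> \<open>x \<in> K\<close> \<open>0 < t\<close> \<open>t < 1\<close> by (simp add: convexD)
  moreover have "\<forall>i. z $ i \<le> y $ i"
    using pos y_nth by (metis diff_ge_0_iff_ge less_imp_le)
  ultimately have "(\<Prod>i\<in>UNIV. y $ i - z $ i) \<le> (\<Prod>i\<in>UNIV. w $ i - z $ i)"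
    by (rule w_max)
  moreover have "0 < (\<Prod>i\<in>UNIV. y $ i - z $ i)"
    unfolding y_nth using pos by (simp add: prod_pos)
  ultimately have "ln (\<Prod>i\<in>UNIV. y $ i - z $ i) \<le> ln (\<Prod>i\<in>UNIV. w $ i - z $ i)"
    by simp
  moreover have "ln (\<Prod>i\<in>UNIV. y $ i - z $ i) = h t" "ln (\<Prod>i\<in>UNIV. w $ i - z $ i) = h 0"
    unfolding h_def y_nth using pos w_above
    by (auto intro!: ln_prod dual_order.strict_implies_not_eq)
  ultimately have "h t \<le> h 0"
    by simp
  then show False
    using h_inc[OF \<open>0 < t\<close> \<open>t < d\<close>] by simp
qed

lemma exists_pos_facing_boundary_above:
  fixes F :: "(real^'n) set"
  assumes F_le: "\<And>u i. u \<in> F \<Longrightarrow> u $ i \<le> M"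
    and "x0 \<in> convex hull F" and "\<forall>i. z $ i < x0 $ i"
  shows "\<exists>w\<in>pos_facing_boundary (convex hull F). \<forall>i. z $ i < w $ i"
proof -
  define K where "K = closure (convex hull F)"
  have "closed K" "convex K"
    by (simp_all add: K_def)
  moreover have "\<And>x i. x \<in> K \<Longrightarrow> x $ i \<le> M"
    unfolding K_def using F_le by (rule closure_convex_hull_component_le)
  moreover have "x0 \<in> K"
    unfolding K_def using \<open>x0 \<in> convex hull F\<close> closure_subset by blast
  ultimately obtain w where "w \<in> K" and w_above: "\<forall>i. z $ i < w $ i"
    and w_max: "\<And>x. x \<in> K \<Longrightarrow> \<forall>i. z $ i \<le> x $ i \<Longrightarrow> (\<Prod>i\<in>UNIV. x $ i - z $ i) \<le> (\<Prod>i\<in>UNIV. w $ i - z $ i)"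
    using exists_max_prod_above[of K M x0 z] \<open>\<forall>i. z $ i < x0 $ i\<close> by blast
  define v where "v = (\<chi> i. 1 / (w $ i - z $ i))"
  have v_pos: "\<forall>i. 0 < v $ i"
    using w_above by (simp add: v_def)
  have supp: "\<forall>x\<in>convex hull F. v \<bullet> x \<le> v \<bullet> w"
    using max_prod_above_supporting[OF \<open>convex K\<close> \<open>w \<in> K\<close> _ w_above w_max] closure_subset
    unfolding v_def K_def by blast
  have "v \<noteq> 0"
    using v_pos by (metis less_irrefl zero_index)
  then have "interior (convex hull F) \<subseteq> {x. v \<bullet> x < v \<bullet> w}"
    using interior_mono[of "convex hull F" "{x. v \<bullet> x \<le> v \<bullet> w}"] supp by auto
  then have "w \<in> frontier (convex hull F)"
    using \<open>w \<in> K\<close> unfolding K_def frontier_def by auto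
  then show ?thesis
    using v_pos supp w_above unfolding pos_facing_boundary_def by blast
qed

lemma near_below_supporting_point:
  fixes v u w :: "real^'n"
  assumes v_pos: "\<forall>j. 0 < v $ j" and "v \<bullet> u \<le> v \<bullet> w"
    and "0 \<le> \<epsilon>" and above: "\<forall>j. w $ j - \<epsilon> < u $ j"
  shows "\<bar>u $ i - w $ i\<bar> \<le> \<epsilon> * (1 + (\<Sum>j\<in>UNIV. v $ j) / v $ i)"
proof -
  have "0 < u $ j - w $ j + \<epsilon>" for j
    using above[rule_format, of j] by linarith
  then have "v $ i * (u $ i - w $ i + \<epsilon>) \<le> (\<Sum>j\<in>UNIV. v $ j * (u $ j - w $ j + \<epsilon>))"
    using v_pos by (intro member_le_sum) (auto intro!: mult_nonneg_nonneg simp: less_imp_le)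
  also have "\<dots> = v \<bullet> u - v \<bullet> w + \<epsilon> * (\<Sum>j\<in>UNIV. v $ j)"
    by (simp add: inner_vec_def algebra_simps sum.distrib sum_subtractf sum_distrib_left)
  also have "\<dots> \<le> \<epsilon> * (\<Sum>j\<in>UNIV. v $ j)"
    using \<open>v \<bullet> u \<le> v \<bullet> w\<close> by simp
  finally have "(u $ i - w $ i + \<epsilon>) * v $ i \<le> \<epsilon> * (\<Sum>j\<in>UNIV. v $ j)"
    by (simp add: mult.commute)
  then have "u $ i - w $ i + \<epsilon> \<le> \<epsilon> * (\<Sum>j\<in>UNIV. v $ j) / v $ i"
    using v_pos by (simp add: pos_le_divide_eq)
  moreover have "0 \<le> \<epsilon> * (\<Sum>j\<in>UNIV. v $ j) / v $ i"
    using v_pos \<open>0 \<le> \<epsilon>\<close> by (simp add: sum_nonneg less_imp_le)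
  ultimately show ?thesis
    using above[rule_format, of i] \<open>0 \<le> \<epsilon>\<close> by (simp add: abs_le_iff distrib_left)
qed

section \<open>Quasi-strictly proper extensions and dominance\<close>

definition qsp_extensions_dominate :: "(('w::finite set \<Rightarrow> real) \<Rightarrow> 'w \<Rightarrow> ereal) \<Rightarrow> real \<Rightarrow> bool" where
  "qsp_extensions_dominate s M \<longleftrightarrow>
     (\<forall>s'. (\<forall>c \<omega>. s' c \<omega> \<le> ereal M) \<longrightarrow> (\<forall>p\<in>Probs. s' p = s p) \<longrightarrow>
       quasi_strictly_proper_on UNIV s' \<longrightarrow>
       (\<forall>c. c \<notin> Probs \<longrightarrow> (\<exists>p\<in>Probs. strictly_dominates (s' p) (s' c))))"

definition inferior_scores_dominated :: "(('w::finite set \<Rightarrow> real) \<Rightarrow> 'w \<Rightarrow> ereal) \<Rightarrow> real \<Rightarrow> bool" where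
  "inferior_scores_dominated s M \<longleftrightarrow>
     (\<forall>z. (\<forall>\<omega>. z \<omega> \<le> ereal M) \<longrightarrow> (\<forall>q\<in>Probs. Exp q z < Exp q (s q)) \<longrightarrow>
       (\<exists>p\<in>Probs. strictly_dominates (s p) z))"

definition continuous_at_nonfinite_scores :: "(('w::finite set \<Rightarrow> real) \<Rightarrow> 'w \<Rightarrow> ereal) \<Rightarrow> bool" where
  "continuous_at_nonfinite_scores s \<longleftrightarrow>
     (\<forall>(ps :: nat \<Rightarrow> 'w set \<Rightarrow> real) p.
        (\<forall>n. ps n \<in> Probs) \<longrightarrow> p \<in> Probs \<longrightarrow> (\<forall>\<omega>. (\<lambda>n. ps n {\<omega>}) \<longlonglongrightarrow> p {\<omega>}) \<longrightarrow>
        (\<forall>n. finite_score (s (ps n))) \<longrightarrow> \<not> finite_score (s p) \<longrightarrow>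
        (\<lambda>n. Exp (ps n) (s (ps n))) \<longlonglongrightarrow> Exp p (s p))"

lemma not_quasi_strictly_proper_if_Exp_minf:
  assumes "p \<in> Probs" and "Exp p (s' p) = -\<infinity>"
  shows "\<not> quasi_strictly_proper_on UNIV s'"
  using assms zero_notin_Probs unfolding quasi_strictly_proper_on_def by fastforce

lemma qsp_extensions_dominate_iff:
  fixes s :: "('w::finite set \<Rightarrow> real) \<Rightarrow> 'w \<Rightarrow> ereal"
  assumes bounded: "\<forall>p\<in>Probs. \<forall>\<omega>. s p \<omega> \<le> ereal M" and proper: "proper_on Probs s"
  shows "qsp_extensions_dominate s M \<longleftrightarrow> inferior_scores_dominated s M"
proof
  assume ext: "qsp_extensions_dominate s M"
  show "inferior_scores_dominated s M"
    unfolding inferior_scores_dominated_def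
  proof (intro allI impI)
    fix z :: "'w \<Rightarrow> ereal"
    assume z_le: "\<forall>\<omega>. z \<omega> \<le> ereal M" and z_inferior: "\<forall>q\<in>Probs. Exp q z < Exp q (s q)"
    define s' where "s' c = (if c \<in> Probs then s c else z)" for c
    have "quasi_strictly_proper_on UNIV s'"
      using proper z_inferior
      by (auto simp: quasi_strictly_proper_on_def proper_on_def s'_def less_imp_le)
    moreover have "\<forall>c \<omega>. s' c \<omega> \<le> ereal M"
      using bounded z_le by (simp add: s'_def)
    moreover have "\<forall>p\<in>Probs. s' p = s p"
      by (simp add: s'_def)
    ultimately have "\<exists>p\<in>Probs. strictly_dominates (s' p) (s' (\<lambda>A. 0))"
      using ext zero_notin_Probs unfolding qsp_extensions_dominate_def by blast
    then show "\<exists>p\<in>Probs. strictly_dominates (s p) z"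
      by (simp add: s'_def zero_notin_Probs)
  qed
next
  assume "inferior_scores_dominated s M"
  then show "qsp_extensions_dominate s M"
    unfolding inferior_scores_dominated_def qsp_extensions_dominate_def quasi_strictly_proper_on_def
    by fastforce
qed

section \<open>Scoring rules with finite expected scores\<close>

locale finite_expectation_rule =
  fixes s :: "('w::finite set \<Rightarrow> real) \<Rightarrow> 'w \<Rightarrow> ereal" and M :: real
  assumes bounded: "\<forall>p\<in>Probs. \<forall>\<omega>. s p \<omega> \<le> ereal M"
    and proper: "proper_on Probs s"
    and Exp_self_neq_minf: "\<forall>p\<in>Probs. Exp p (s p) \<noteq> -\<infinity>"
begin

abbreviation F :: "(real^'w) set" where
  "F \<equiv> finite_scores s"

definition exp_self :: "('w set \<Rightarrow> real) \<Rightarrow> real" where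
  "exp_self p = real_of_ereal (Exp p (s p))"

definition score_vec :: "('w set \<Rightarrow> real) \<Rightarrow> real^'w" where
  "score_vec p = (\<chi> \<omega>. real_of_ereal (s p \<omega>))"

lemma score_le: "p \<in> Probs \<Longrightarrow> s p \<omega> \<le> ereal M"
  using bounded by blast

lemma Exp_self_eq: "p \<in> Probs \<Longrightarrow> Exp p (s p) = ereal (exp_self p)"
  using Exp_le_const[of p "s p" M] score_le Exp_self_neq_minf
  unfolding exp_self_def by (cases "Exp p (s p)") auto

lemma Exp_le_exp_self: "p \<in> Probs \<Longrightarrow> c \<in> Probs \<Longrightarrow> Exp p (s c) \<le> ereal (exp_self p)"
  using proper Exp_self_eq unfolding proper_on_def by auto

lemma finite_score_iff:
  assumes "p \<in> Probs"
  shows "finite_score (s p) \<longleftrightarrow> (\<forall>\<omega>. s p \<omega> \<noteq> -\<infinity>)"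
proof -
  have "\<bar>s p \<omega>\<bar> < \<infinity> \<longleftrightarrow> s p \<omega> \<noteq> -\<infinity>" for \<omega>
    using score_le[OF assms, of \<omega>] by (cases "s p \<omega>") auto
  then show ?thesis
    unfolding finite_score_def by blast
qed

lemma finite_score_if_pos:
  assumes p: "p \<in> Probs" and pos: "\<And>\<omega>. 0 < p {\<omega>}"
  shows "finite_score (s p)"
proof -
  have "s p \<omega> \<noteq> -\<infinity>" for \<omega>
  proof
    assume "s p \<omega> = -\<infinity>"
    then have "Exp p (s p) = -\<infinity>"
      using Exp_eq_minf[OF p _ pos] score_le[OF p] by blast
    then show False
      using Exp_self_neq_minf p by blast
  qed
  then show ?thesis
    using finite_score_iff[OF p] by blast
qed

lemma finite_score_if_dominates:
  assumes p: "p \<in> Probs" and dom: "strictly_dominates (s p) z"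
  shows "finite_score (s p)"
proof -
  have "s p \<omega> \<noteq> -\<infinity>" for \<omega>
    using dom[unfolded strictly_dominates_def, rule_format, of \<omega>] by (cases "z \<omega>") auto
  then show ?thesis
    using finite_score_iff[OF p] by blast
qed

lemma score_eq_score_vec: "finite_score (s p) \<Longrightarrow> s p = (\<lambda>\<omega>. ereal (score_vec p $ \<omega>))"
  unfolding finite_score_def score_vec_def by (simp add: ereal_real')

lemma score_vec_in_F:
  assumes "p \<in> Probs" and "finite_score (s p)"
  shows "score_vec p \<in> F"
  unfolding finite_scores_def using assms score_eq_score_vec[OF assms(2)] by (auto intro!: bexI[of _ p])

lemma exp_self_eq_inner:
  assumes "p \<in> Probs" and "finite_score (s p)"
  shows "exp_self p = prob_vec p \<bullet> score_vec p"
proof -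
  have "ereal (exp_self p) = Exp p (\<lambda>\<omega>. ereal (score_vec p $ \<omega>))"
    using Exp_self_eq[OF assms(1)] score_eq_score_vec[OF assms(2)] by simp
  then show ?thesis
    by (simp add: Exp_ereal_vec)
qed

lemma F_le: "x \<in> F \<Longrightarrow> x $ \<omega> \<le> M"
  unfolding finite_scores_def using score_le by fastforce

lemma inner_F_le_exp_self:
  assumes q: "q \<in> Probs" and "x \<in> F"
  shows "prob_vec q \<bullet> x \<le> exp_self q"
proof -
  obtain p where "p \<in> Probs" and "s p = (\<lambda>\<omega>. ereal (x $ \<omega>))"
    using \<open>x \<in> F\<close> unfolding finite_scores_def by auto
  then show ?thesis
    using Exp_le_exp_self[OF q \<open>p \<in> Probs\<close>] by (simp add: Exp_ereal_vec)
qed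

lemma inner_le_exp_self:
  assumes "q \<in> Probs" and "x \<in> closure (convex hull F)"
  shows "prob_vec q \<bullet> x \<le> exp_self q"
  using closure_convex_hull_halfspace_le[OF inner_F_le_exp_self[OF assms(1)] assms(2)] .

lemma inner_F_le_mixture:
  assumes p: "p \<in> Probs" and q: "q \<in> Probs" and "x \<in> F" and "0 \<le> t" and "t \<le> 1"
    and below: "\<And>\<omega>. (1 - t) * p {\<omega>} \<le> q {\<omega>}"
  shows "prob_vec q \<bullet> x \<le> (1 - t) * exp_self p + t * M"
proof -
  define r where "r \<omega> = q {\<omega>} - (1 - t) * p {\<omega>}" for \<omega>
  have "(\<Sum>\<omega>\<in>UNIV. r \<omega>) = t"
    unfolding r_def using Probs_sum_singletons[OF p] Probs_sum_singletons[OF q]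
    by (simp add: sum_subtractf flip: sum_distrib_left)
  have "prob_vec q \<bullet> x = (1 - t) * (prob_vec p \<bullet> x) + (\<Sum>\<omega>\<in>UNIV. r \<omega> * x $ \<omega>)"
    unfolding inner_prob_vec r_def by (simp add: algebra_simps sum.distrib sum_subtractf sum_distrib_left)
  also have "\<dots> \<le> (1 - t) * exp_self p + (\<Sum>\<omega>\<in>UNIV. r \<omega> * M)"
  proof (intro add_mono sum_mono mult_left_mono)
    show "prob_vec p \<bullet> x \<le> exp_self p"
      using p \<open>x \<in> F\<close> by (rule inner_F_le_exp_self)
    show "0 \<le> 1 - t"
      using \<open>t \<le> 1\<close> by simp
  qed (use F_le[OF \<open>x \<in> F\<close>] below in \<open>auto simp: r_def\<close>)
  also have "(\<Sum>\<omega>\<in>UNIV. r \<omega> * M) = t * M"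
    using \<open>(\<Sum>\<omega>\<in>UNIV. r \<omega>) = t\<close> by (simp flip: sum_distrib_right)
  finally show ?thesis .
qed

lemma approx_exp_self_if_inferior_dominated:
  assumes dom: "inferior_scores_dominated s M" and p: "p \<in> Probs" and "0 < \<epsilon>"
  shows "\<exists>x\<in>F. exp_self p - \<epsilon> < prob_vec p \<bullet> x"
proof -
  define z where "z \<omega> = s p \<omega> + ereal (- \<epsilon> / 2)" for \<omega>
  have not_inf: "s p \<omega> \<noteq> \<infinity>" for \<omega>
    using score_le[OF p, of \<omega>] by auto
  have "z \<omega> \<le> s p \<omega>" for \<omega>
    unfolding z_def using \<open>0 < \<epsilon>\<close> not_inf[of \<omega>] by (cases "s p \<omega>") auto
  then have "\<forall>\<omega>. z \<omega> \<le> ereal M"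
    using score_le[OF p] order_trans by blast
  moreover have "Exp q z < Exp q (s q)" if q: "q \<in> Probs" for q
  proof -
    have "Exp q z = Exp q (s p) + ereal (- \<epsilon> / 2)"
      unfolding z_def by (rule Exp_add_const[OF q not_inf])
    also have "\<dots> \<le> ereal (exp_self q) + ereal (- \<epsilon> / 2)"
      using Exp_le_exp_self[OF q p] by (rule add_right_mono)
    also have "\<dots> < Exp q (s q)"
      using \<open>0 < \<epsilon>\<close> Exp_self_eq[OF q] by simp
    finally show ?thesis .
  qed
  ultimately obtain p' where p': "p' \<in> Probs" "strictly_dominates (s p') z"
    using dom unfolding inferior_scores_dominated_def by blast
  then have fin: "finite_score (s p')"
    by (rule finite_score_if_dominates)
  have "ereal (exp_self p - \<epsilon> / 2) = Exp p z"
    unfolding z_def Exp_add_const[OF p not_inf] Exp_self_eq[OF p] by simp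
  also have "\<dots> \<le> Exp p (s p')"
    using p'(2) unfolding strictly_dominates_def by (intro Exp_mono[OF p] less_imp_le) simp
  also have "\<dots> = ereal (prob_vec p \<bullet> score_vec p')"
    by (subst score_eq_score_vec[OF fin]) (rule Exp_ereal_vec)
  finally show ?thesis
    using score_vec_in_F[OF p' (1) fin] \<open>0 < \<epsilon>\<close> by force
qed

lemma exp_self_eventually_above:
  assumes approx: "\<And>\<epsilon>. 0 < \<epsilon> \<Longrightarrow> \<exists>x\<in>F. exp_self p - \<epsilon> < prob_vec p \<bullet> x"
    and ps: "\<And>n. ps n \<in> Probs" and conv: "\<And>\<omega>. (\<lambda>n. ps n {\<omega>}) \<longlonglongrightarrow> p {\<omega>}"
    and "a < exp_self p"
  shows "\<forall>\<^sub>F n in sequentially. a < exp_self (ps n)"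
proof -
  obtain x where "x \<in> F" and "a < prob_vec p \<bullet> x"
    using approx[of "exp_self p - a"] \<open>a < exp_self p\<close> by auto
  moreover have "(\<lambda>n. prob_vec (ps n) \<bullet> x) \<longlonglongrightarrow> prob_vec p \<bullet> x"
    unfolding inner_prob_vec by (intro tendsto_intros conv)
  ultimately have "\<forall>\<^sub>F n in sequentially. a < prob_vec (ps n) \<bullet> x"
    by (simp add: order_tendstoD(1))
  then show ?thesis
    using inner_F_le_exp_self[OF ps \<open>x \<in> F\<close>] by (auto elim!: eventually_mono intro: less_le_trans)
qed

lemma exp_self_eventually_below:
  assumes ps: "\<And>n. ps n \<in> Probs" and p: "p \<in> Probs"
    and conv: "\<And>\<omega>. (\<lambda>n. ps n {\<omega>}) \<longlonglongrightarrow> p {\<omega>}" and fin: "\<And>n. finite_score (s (ps n))"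
    and "exp_self p < b"
  shows "\<forall>\<^sub>F n in sequentially. exp_self (ps n) < b"
proof -
  obtain t where "t \<longlonglongrightarrow> 0" and t_nonneg: "\<And>n. 0 \<le> t n"
    and below: "\<And>n \<omega>. (1 - t n) * p {\<omega>} \<le> ps n {\<omega>}"
    using scaled_lower_bound_sequence[OF p ps conv] by blast
  have "(\<lambda>n. (1 - t n) * exp_self p + t n * M) \<longlonglongrightarrow> (1 - 0) * exp_self p + 0 * M"
    by (intro tendsto_intros \<open>t \<longlonglongrightarrow> 0\<close>)
  then have "\<forall>\<^sub>F n in sequentially. (1 - t n) * exp_self p + t n * M < b"
    using \<open>exp_self p < b\<close> by (simp add: order_tendstoD(2))
  moreover have "\<forall>\<^sub>F n in sequentially. t n < 1"
    using \<open>t \<longlonglongrightarrow> 0\<close> by (simp add: order_tendstoD(2))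
  ultimately show ?thesis
  proof eventually_elim
    case (elim n)
    have "exp_self (ps n) = prob_vec (ps n) \<bullet> score_vec (ps n)"
      by (rule exp_self_eq_inner[OF ps fin])
    also have "\<dots> \<le> (1 - t n) * exp_self p + t n * M"
      using elim by (intro inner_F_le_mixture[OF p ps score_vec_in_F[OF ps fin] t_nonneg] below) simp
    finally show ?case
      using elim by simp
  qed
qed

lemma Exp_self_tendsto:
  assumes approx: "\<And>\<epsilon>. 0 < \<epsilon> \<Longrightarrow> \<exists>x\<in>F. exp_self p - \<epsilon> < prob_vec p \<bullet> x"
    and ps: "\<And>n. ps n \<in> Probs" and p: "p \<in> Probs"
    and conv: "\<And>\<omega>. (\<lambda>n. ps n {\<omega>}) \<longlonglongrightarrow> p {\<omega>}" and fin: "\<And>n. finite_score (s (ps n))"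
  shows "(\<lambda>n. Exp (ps n) (s (ps n))) \<longlonglongrightarrow> Exp p (s p)"
proof -
  have "(\<lambda>n. exp_self (ps n)) \<longlonglongrightarrow> exp_self p"
    using exp_self_eventually_above[OF approx ps conv] exp_self_eventually_below[OF ps p conv fin]
    by (rule order_tendstoI)
  then show ?thesis
    by (simp add: Exp_self_eq ps p)
qed

lemma shifted_closure_point_inferior:
  assumes w_cl: "w \<in> closure (convex hull F)" and "0 < \<epsilon>"
  shows "\<forall>\<omega>. ereal (w $ \<omega> - \<epsilon>) \<le> ereal M"
    and "\<forall>q\<in>Probs. Exp q (\<lambda>\<omega>. ereal (w $ \<omega> - \<epsilon>)) < Exp q (s q)"
proof -
  have "w $ \<omega> \<le> M" for \<omega>
    by (rule closure_convex_hull_component_le[OF _ w_cl]) (rule F_le)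
  then show "\<forall>\<omega>. ereal (w $ \<omega> - \<epsilon>) \<le> ereal M"
    using \<open>0 < \<epsilon>\<close> by (smt (verit) ereal_less_eq(3))
  show "\<forall>q\<in>Probs. Exp q (\<lambda>\<omega>. ereal (w $ \<omega> - \<epsilon>)) < Exp q (s q)"
  proof
    fix q :: "'w set \<Rightarrow> real"
    assume q: "q \<in> Probs"
    have "Exp q (\<lambda>\<omega>. ereal (w $ \<omega> - \<epsilon>)) = ereal (prob_vec q \<bullet> (w - (\<chi> \<omega>. \<epsilon>)))"
      using Exp_ereal_vec[of q "w - (\<chi> \<omega>. \<epsilon>)"] by simp
    also have "prob_vec q \<bullet> (w - (\<chi> \<omega>. \<epsilon>)) = prob_vec q \<bullet> w - \<epsilon>"
      by (simp add: inner_diff_right inner_prob_vec_const[OF q])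
    finally show "Exp q (\<lambda>\<omega>. ereal (w $ \<omega> - \<epsilon>)) < Exp q (s q)"
      using inner_le_exp_self[OF q w_cl] Exp_self_eq[OF q] \<open>0 < \<epsilon>\<close> by simp
  qed
qed

lemma dense_if_inferior_dominated:
  assumes dom: "inferior_scores_dominated s M"
  shows "dense_in_set F (pos_facing_boundary (convex hull F))"
  unfolding dense_in_set_def
proof (intro allI impI)
  fix U :: "(real^'w) set"
  assume "open U" and "U \<inter> pos_facing_boundary (convex hull F) \<noteq> {}"
  then obtain w v where "w \<in> U" and w_cl: "w \<in> closure (convex hull F)" and v_pos: "\<forall>\<omega>. 0 < v $ \<omega>"
    and supp: "\<forall>x\<in>convex hull F. v \<bullet> x \<le> v \<bullet> w"
    unfolding pos_facing_boundary_def frontier_def by blast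
  obtain r where "0 < r" and "ball w r \<subseteq> U"
    using \<open>open U\<close> \<open>w \<in> U\<close> open_contains_ball by blast
  define C where "C = (\<Sum>i\<in>UNIV. 1 + (\<Sum>j\<in>UNIV. v $ j) / v $ i)"
  have "0 < C"
    unfolding C_def using v_pos by (intro sum_pos add_pos_nonneg divide_nonneg_pos sum_nonneg) (auto intro: less_imp_le)
  define \<epsilon> where "\<epsilon> = r / (2 * C)"
  have "0 < \<epsilon>"
    unfolding \<epsilon>_def using \<open>0 < r\<close> \<open>0 < C\<close> by simp
  obtain p where p: "p \<in> Probs" "strictly_dominates (s p) (\<lambda>\<omega>. ereal (w $ \<omega> - \<epsilon>))"
    using dom shifted_closure_point_inferior[OF w_cl \<open>0 < \<epsilon>\<close>]
    unfolding inferior_scores_dominated_def by (elim allE[of _ "\<lambda>\<omega>. ereal (w $ \<omega> - \<epsilon>)"]) blast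
  then have fin: "finite_score (s p)"
    by (rule finite_score_if_dominates)
  define u where "u = score_vec p"
  have "u \<in> F"
    unfolding u_def using p(1) fin by (rule score_vec_in_F)
  have above: "\<forall>\<omega>. w $ \<omega> - \<epsilon> < u $ \<omega>"
    using p(2) score_eq_score_vec[OF fin] unfolding strictly_dominates_def u_def by simp
  have "dist u w \<le> (\<Sum>i\<in>UNIV. \<bar>u $ i - w $ i\<bar>)"
    unfolding dist_norm using norm_le_l1_cart[of "u - w"] by simp
  also have "\<dots> \<le> (\<Sum>i\<in>UNIV. \<epsilon> * (1 + (\<Sum>j\<in>UNIV. v $ j) / v $ i))"
    using near_below_supporting_point[OF v_pos _ _ above] supp hull_inc[OF \<open>u \<in> F\<close>] \<open>0 < \<epsilon>\<close>
    by (intro sum_mono) simp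
  also have "\<dots> = \<epsilon> * C"
    by (simp add: C_def sum_distrib_left)
  also have "\<dots> = r / 2"
    using \<open>0 < C\<close> by (simp add: \<epsilon>_def)
  finally have "u \<in> U"
    using \<open>0 < r\<close> \<open>ball w r \<subseteq> U\<close> by (auto simp: dist_commute)
  then show "U \<inter> F \<noteq> {}"
    using \<open>u \<in> F\<close> by blast
qed

lemma approx_exp_self_if_continuous:
  assumes cont: "continuous_at_nonfinite_scores s" and p: "p \<in> Probs" and "0 < \<epsilon>"
  shows "\<exists>x\<in>F. exp_self p - \<epsilon> < prob_vec p \<bullet> x"
proof (cases "finite_score (s p)")
  case True
  then show ?thesis
    using score_vec_in_F[OF p True] exp_self_eq_inner[OF p True] \<open>0 < \<epsilon>\<close> by force
next
  case False
  obtain qs t where qs: "\<And>n. qs n \<in> Probs" and qs_pos: "\<And>n \<omega>. 0 < qs n {\<omega>}"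
    and qs_lim: "\<And>\<omega>. (\<lambda>n. qs n {\<omega>}) \<longlonglongrightarrow> p {\<omega>}" and "t \<longlonglongrightarrow> 0" and t_pos: "\<And>n. 0 < t n"
    and t_less: "\<And>n. t n < 1"
    and qs_vec: "\<And>n. prob_vec (qs n) = (1 - t n) *\<^sub>R prob_vec p + t n *\<^sub>R prob_vec uniform_prob"
    using positive_approximating_sequence[OF p] by blast
  have fin: "finite_score (s (qs n))" for n
    using qs qs_pos by (rule finite_score_if_pos)
  define x where "x n = score_vec (qs n)" for n
  have x_F: "x n \<in> F" for n
    unfolding x_def using qs fin by (rule score_vec_in_F)
  have "(\<lambda>n. Exp (qs n) (s (qs n))) \<longlonglongrightarrow> Exp p (s p)"
    using cont qs p qs_lim fin False unfolding continuous_at_nonfinite_scores_def by blast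
  then have "(\<lambda>n. exp_self (qs n)) \<longlonglongrightarrow> exp_self p"
    by (simp add: Exp_self_eq qs p)
  then have "(\<lambda>n. (exp_self (qs n) - t n * exp_self uniform_prob) / (1 - t n)) \<longlonglongrightarrow> exp_self p"
    by (auto intro!: tendsto_eq_intros \<open>t \<longlonglongrightarrow> 0\<close>)
  then have "\<forall>\<^sub>F n in sequentially. exp_self p - \<epsilon> < (exp_self (qs n) - t n * exp_self uniform_prob) / (1 - t n)"
    using \<open>0 < \<epsilon>\<close> by (simp add: order_tendstoD(1))
  then obtain n where n: "exp_self p - \<epsilon> < (exp_self (qs n) - t n * exp_self uniform_prob) / (1 - t n)"
    by (meson eventually_sequentially order.refl)
  have "exp_self (qs n) = (1 - t n) * (prob_vec p \<bullet> x n) + t n * (prob_vec uniform_prob \<bullet> x n)"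
    unfolding exp_self_eq_inner[OF qs fin] x_def qs_vec by (simp add: inner_add_left)
  also have "\<dots> \<le> (1 - t n) * (prob_vec p \<bullet> x n) + t n * exp_self uniform_prob"
    using inner_F_le_exp_self[OF uniform_prob_in_Probs x_F] t_pos[of n] by simp
  finally have "(exp_self (qs n) - t n * exp_self uniform_prob) / (1 - t n) \<le> prob_vec p \<bullet> x n"
    using t_less[of n] by (simp add: pos_divide_le_eq mult.commute)
  then have "exp_self p - \<epsilon> < prob_vec p \<bullet> x n"
    using n by linarith
  then show ?thesis
    using x_F by blast
qed

lemma truncation_below_F:
  assumes cont: "continuous_at_nonfinite_scores s" and z_le: "\<forall>\<omega>. z \<omega> \<le> ereal M"
    and z_inferior: "\<forall>q\<in>Probs. Exp q z < Exp q (s q)" and q: "q \<in> prob_simplex"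
  shows "\<exists>N. \<exists>u\<in>F. q \<bullet> truncate_minf z N < q \<bullet> u"
proof (cases "\<exists>\<omega>. z \<omega> = -\<infinity> \<and> 0 < q $ \<omega>")
  case True
  have "score_vec uniform_prob \<in> F"
    using uniform_prob_in_Probs finite_score_if_pos[OF uniform_prob_in_Probs uniform_prob_pos]
    by (rule score_vec_in_F)
  moreover obtain N where "q \<bullet> truncate_minf z N < q \<bullet> score_vec uniform_prob"
    using True inner_truncate_minf_unbounded[OF q] by blast
  ultimately show ?thesis
    by blast
next
  case False
  define p where "p = prob_of_vec q"
  have p: "p \<in> Probs"
    unfolding p_def using q by (rule prob_of_vec_in_Probs)
  have "Exp p z = ereal (prob_vec p \<bullet> truncate_minf z 0)"
  proof (rule Exp_eq_inner_truncate_minf)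
    show "z \<omega> \<noteq> \<infinity>" for \<omega>
      using z_le[rule_format, of \<omega>] by auto
    show "z \<omega> = -\<infinity> \<Longrightarrow> p {\<omega>} = 0" for \<omega>
      using False q unfolding p_def prob_simplex_def by (simp add: order.strict_iff_order)
  qed
  moreover have "Exp p z < Exp p (s p)"
    using z_inferior p by blast
  ultimately have "q \<bullet> truncate_minf z 0 < exp_self p"
    using Exp_self_eq[OF p] by (simp add: p_def)
  then obtain u where "u \<in> F" and "exp_self p - (exp_self p - q \<bullet> truncate_minf z 0) < q \<bullet> u"
    using approx_exp_self_if_continuous[OF cont p, of "exp_self p - q \<bullet> truncate_minf z 0"]
    by (auto simp: p_def)
  then show ?thesis
    by auto
qed

lemma inferior_dominated_if_continuous_dense:
  assumes cont: "continuous_at_nonfinite_scores s"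
    and dense: "dense_in_set F (pos_facing_boundary (convex hull F))"
  shows "inferior_scores_dominated s M"
  unfolding inferior_scores_dominated_def
proof (intro allI impI)
  fix z :: "'w \<Rightarrow> ereal"
  assume z_le: "\<forall>\<omega>. z \<omega> \<le> ereal M" and z_inferior: "\<forall>q\<in>Probs. Exp q z < Exp q (s q)"
  obtain N where "\<forall>q\<in>prob_simplex. \<exists>u\<in>F. q \<bullet> truncate_minf z N < q \<bullet> u"
    using uniform_truncation truncation_below_F[OF cont z_le z_inferior] by blast
  define y where "y = truncate_minf z N"
  obtain x0 where "x0 \<in> convex hull F" and "\<forall>\<omega>. y $ \<omega> < x0 $ \<omega>"
    using exists_convex_hull_above \<open>\<forall>q\<in>prob_simplex. \<exists>u\<in>F. q \<bullet> truncate_minf z N < q \<bullet> u\<close>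
    unfolding y_def by blast
  then obtain w where "w \<in> pos_facing_boundary (convex hull F)" and "\<forall>\<omega>. y $ \<omega> < w $ \<omega>"
    using exists_pos_facing_boundary_above[OF F_le] by blast
  define U where "U = (\<Inter>\<omega>. {x::real^'w. y $ \<omega> < x $ \<omega>})"
  have "open U"
    unfolding U_def by (intro open_INT ballI allI open_halfspace_component_gt_cart) simp
  moreover have "U \<inter> pos_facing_boundary (convex hull F) \<noteq> {}"
    using \<open>w \<in> pos_facing_boundary (convex hull F)\<close> \<open>\<forall>\<omega>. y $ \<omega> < w $ \<omega>\<close> unfolding U_def by blast
  ultimately obtain u where "u \<in> U" and "u \<in> F"
    using dense unfolding dense_in_set_def by blast
  then obtain p where "p \<in> Probs" and "\<forall>\<omega>. s p \<omega> = ereal (u $ \<omega>)"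
    unfolding finite_scores_def by blast
  moreover have "z \<omega> < ereal (u $ \<omega>)" for \<omega>
    using z_le[rule_format, of \<omega>] \<open>u \<in> U\<close> unfolding U_def y_def
    by (intro less_if_truncate_minf_less) auto
  ultimately have "strictly_dominates (s p) z"
    unfolding strictly_dominates_def by simp
  then show "\<exists>p\<in>Probs. strictly_dominates (s p) z"
    using \<open>p \<in> Probs\<close> by blast
qed

lemma inferior_scores_dominated_iff:
  "inferior_scores_dominated s M \<longleftrightarrow>
     continuous_at_nonfinite_scores s \<and> dense_in_set F (pos_facing_boundary (convex hull F))"
proof
  assume dom: "inferior_scores_dominated s M"
  have "continuous_at_nonfinite_scores s"
    unfolding continuous_at_nonfinite_scores_def
    using Exp_self_tendsto[OF approx_exp_self_if_inferior_dominated[OF dom]] by blast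
  then show "continuous_at_nonfinite_scores s \<and> dense_in_set F (pos_facing_boundary (convex hull F))"
    using dense_if_inferior_dominated[OF dom] by blast
qed (blast intro: inferior_dominated_if_continuous_dense)

end

theorem theorem1:
  fixes s :: "('w::finite set \<Rightarrow> real) \<Rightarrow> 'w \<Rightarrow> ereal" and M :: real
  assumes bounded: "\<forall>p\<in>Probs. \<forall>\<omega>. s p \<omega> \<le> ereal M"
    and proper: "proper_on Probs s"
  shows "(\<forall>s' :: ('w set \<Rightarrow> real) \<Rightarrow> 'w \<Rightarrow> ereal.
            (\<forall>c \<omega>. s' c \<omega> \<le> ereal M) \<longrightarrow> (\<forall>p\<in>Probs. s' p = s p) \<longrightarrow>
            quasi_strictly_proper_on UNIV s' \<longrightarrow>
            (\<forall>c. c \<notin> Probs \<longrightarrow> (\<exists>p\<in>Probs. strictly_dominates (s' p) (s' c))))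
     \<longleftrightarrow>
     ((\<exists>p\<in>Probs. \<bar>Exp p (s p)\<bar> = \<infinity>) \<or>
      ((\<forall>(ps :: nat \<Rightarrow> 'w set \<Rightarrow> real) p.
          (\<forall>n. ps n \<in> Probs) \<longrightarrow> p \<in> Probs \<longrightarrow>
          (\<forall>\<omega>. (\<lambda>n. ps n {\<omega>}) \<longlonglongrightarrow> p {\<omega>}) \<longrightarrow>
          (\<forall>n. finite_score (s (ps n))) \<longrightarrow> \<not> finite_score (s p) \<longrightarrow>
          (\<lambda>n. Exp (ps n) (s (ps n))) \<longlonglongrightarrow> Exp p (s p)) \<and>
       dense_in_set (finite_scores s) (pos_facing_boundary (convex hull (finite_scores s)))))"
proof (cases "\<exists>p\<in>Probs. Exp p (s p) = -\<infinity>")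
  case True
  then obtain p where "p \<in> Probs" and "Exp p (s p) = -\<infinity>"
    by blast
  then have "\<not> quasi_strictly_proper_on UNIV s'" if "\<forall>p\<in>Probs. s' p = s p" for s'
    using that by (intro not_quasi_strictly_proper_if_Exp_minf[of p]) simp_all
  then show ?thesis
    using \<open>p \<in> Probs\<close> \<open>Exp p (s p) = -\<infinity>\<close> by force
next
  case False
  then interpret finite_expectation_rule s M
    using bounded proper by unfold_locales auto
  have "\<not> (\<exists>p\<in>Probs. \<bar>Exp p (s p)\<bar> = \<infinity>)"
    using Exp_self_eq by auto
  then show ?thesis
    using qsp_extensions_dominate_iff[OF bounded proper] inferior_scores_dominated_iff
    unfolding qsp_extensions_dominate_def continuous_at_nonfinite_scores_def by blast
qed

end
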